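(* Let $\ell:\mathcal{R}\to\mathbb{R}^{\mathcal{Y}}_+$ be a discrete loss, $L:\mathbb{R}^d\to\mathbb{R}^{\mathcal{Y}}_+$ a polyhedral loss, and $\psi:\mathbb{R}^d\to\mathcal{R}$ a link such that $(L,\psi)$ is consistent for $\ell$. Then there exists $c>0$ such that for all hypotheses $h:\mathcal{X}\to\mathbb{R}^d$ and all data distributions $\mathcal{D}$ on $\mathcal{X}\times\mathcal{Y}$, $R_\ell(\psi\circ h;\mathcal{D})\le c\cdot R_L(h;\mathcal{D})$.
   Context: $\mathcal{Y}$ is a finite label set and $\mathcal{X}$ a feature space; $\mathbb{R}^{\mathcal{Y}}_+$ is the nonnegative orthant. A loss $L:\mathcal{R}\to\mathbb{R}^{\mathcal{Y}}_+$ assigns a loss $L(r)_y$ to report $r$ and label $y$; it is discrete if $\mathcal{R}$ is finite; $L:\mathbb{R}^d\to\mathbb{R}^{\mathcal{Y}}_+$ is polyhedral if each $u\mapsto L(u)_y$ is a pointwise maximum of finitely many affine functions. Regrets: $R_L(h;\mathcal{D})=\mathbb{E}_{(X,Y)\sim\mathcal{D}}L(h(X))_Y-\inf_{h'}\mathbb{E}_{\mathcal{D}}L(h'(X))_Y$ and $R_\ell(g;\mathcal{D})=\mathbb{E}_{\mathcal{D}}\ell(g(X))_Y-\inf_{g'}\mathbb{E}_{\mathcal{D}}\ell(g'(X))_Y$, infima over all measurable $h':\mathcal{X}\to\mathbb{R}^d$, $g':\mathcal{X}\to\mathcal{R}$; hypotheses are measurable. $(L,\psi)$ is consistent for $\ell$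 if for every distribution $\mathcal{D}$ on $\mathcal{X}\times\mathcal{Y}$ and every sequence of hypotheses $h_1,h_2,\dots$ with $R_L(h_i;\mathcal{D})\to0$, we have $R_\ell(\psi\circ h_i;\mathcal{D})\to0$. *)

theory Defs
  imports "HOL-Probability.Probability"
begin

definition nonneg_loss :: "('r \<Rightarrow> 'y \<Rightarrow> real) \<Rightarrow> bool" where
  "nonneg_loss L \<longleftrightarrow> (\<forall>r y. 0 \<le> L r y)"

definition polyhedral_loss :: "('a::euclidean_space \<Rightarrow> 'y \<Rightarrow> real) \<Rightarrow> bool" where
  "polyhedral_loss L \<longleftrightarrow>
     (\<forall>y. \<exists>A :: ('a \<times> real) set. finite A \<and> A \<noteq> {} \<and>
        (\<forall>u. L u y = Max ((\<lambda>(a, b). a \<bullet> u + b) ` A)))"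

definition data_dist :: "'x measure \<Rightarrow> ('x \<times> 'y) measure \<Rightarrow> bool" where
  "data_dist MX D \<longleftrightarrow> prob_space D \<and> sets D = sets (MX \<Otimes>\<^sub>M count_space (UNIV :: 'y set))"

definition exp_loss :: "('r \<Rightarrow> 'y \<Rightarrow> real) \<Rightarrow> ('x \<times> 'y) measure \<Rightarrow> ('x \<Rightarrow> 'r) \<Rightarrow> ennreal" where
  "exp_loss L D h = (\<integral>\<^sup>+ z. ennreal (L (h (fst z)) (snd z)) \<partial>D)"

definition regret :: "'x measure \<Rightarrow> 'r measure \<Rightarrow> ('r \<Rightarrow> 'y \<Rightarrow> real)
    \<Rightarrow> ('x \<times> 'y) measure \<Rightarrow> ('x \<Rightarrow> 'r) \<Rightarrow> ennreal" where
  "regret MX MR L D h = exp_loss L D h - (INF h' \<in> measurable MX MR. exp_loss L D h')"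

definition consistent ::
  "'x measure \<Rightarrow> ('a::euclidean_space \<Rightarrow> 'y \<Rightarrow> real) \<Rightarrow> ('a \<Rightarrow> 'r) \<Rightarrow> ('r \<Rightarrow> 'y \<Rightarrow> real) \<Rightarrow> bool" where
  "consistent MX L \<psi> ell \<longleftrightarrow>
     (\<forall>D. data_dist MX D \<longrightarrow>
        (\<forall>hs :: nat \<Rightarrow> 'x \<Rightarrow> 'a. (\<forall>i. hs i \<in> borel_measurable MX) \<longrightarrow>
           ((\<lambda>i. regret MX borel L D (hs i)) \<longlonglongrightarrow> 0) \<longrightarrow>
           ((\<lambda>i. regret MX (count_space UNIV) ell D (\<psi> \<circ> hs i)) \<longlonglongrightarrow> 0)))"

end

(*
  Since L is polyhedral, for every nonnegative weight vector w on the labels the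
  weighted surrogate risk u |-> sum_y w_y L(u)_y attains its minimum on one finite set S of
  reports, independent of w: one report for each pattern of active affine pieces. (From any u,
  moving along directions that keep the active pieces tied either lowers the risk until a new
  piece becomes active, or leaves it unchanged up to the representative of the active pattern.)

  Consistency, tested on data distributions concentrated on a single instance, gives
  calibration: at every label distribution p there is eps > 0 such that every report whose
  surrogate excess risk is below eps is linked to an optimal target report. The simplex is
  covered by the finitely many polytopes on which a fixed s in S is optimal. On each of them the
  target excess risk is convex in p and the surrogate excess risk is linear, so the linear bounds
  obtained from calibration at the finitely many vertices extend, with one constant c, to all p.

  Finally a data distribution disintegrates into its marginal on X and conditional label weights,
  and integrating the pointwise bound gives the regret bound.
*)

theory Submission
  imports Defs
begin

section \<open>Conditional and Bayes risks\<close>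

definition cond_risk :: "real^'y::finite \<Rightarrow> ('r \<Rightarrow> 'y \<Rightarrow> real) \<Rightarrow> 'r \<Rightarrow> real" where
  "cond_risk p F r = (\<Sum>y\<in>UNIV. p$y * F r y)"

definition bayes_risk :: "'r set \<Rightarrow> ('r \<Rightarrow> 'y::finite \<Rightarrow> real) \<Rightarrow> real^'y \<Rightarrow> real" where
  "bayes_risk X F p = Min (cond_risk p F ` X)"

definition label_simplex :: "(real^'y::finite) set" where
  "label_simplex = {p. 0 \<le> p \<and> sum (($) p) UNIV = 1}"

lemma cond_risk_nonneg: "0 \<le> p \<Longrightarrow> (\<And>y. 0 \<le> F r y) \<Longrightarrow> 0 \<le> cond_risk p F r"
  unfolding cond_risk_def less_eq_vec_def by (simp add: sum_nonneg)

lemma ennreal_cond_risk: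
  assumes "0 \<le> p" "\<And>y. 0 \<le> F r y"
  shows "(\<Sum>y\<in>UNIV. ennreal (p$y) * ennreal (F r y)) = ennreal (cond_risk p F r)"
  using assms unfolding cond_risk_def less_eq_vec_def by (simp add: sum_ennreal flip: ennreal_mult)

lemma cond_risk_add: "cond_risk (p + q) F r = cond_risk p F r + cond_risk q F r"
  unfolding cond_risk_def by (simp add: distrib_right sum.distrib)

lemma cond_risk_scaleR: "cond_risk (t *\<^sub>R p) F r = t * cond_risk p F r"
  unfolding cond_risk_def by (simp add: sum_distrib_left mult.assoc)

lemma cond_risk_shift:
  "(\<And>y. F v y = F u y + t * g y) \<Longrightarrow> cond_risk w F v = cond_risk w F u + t * (\<Sum>y\<in>UNIV. w$y * g y)"
  unfolding cond_risk_def by (simp add: algebra_simps sum.distrib sum_distrib_left)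

lemma bayes_risk_le: "finite X \<Longrightarrow> r \<in> X \<Longrightarrow> bayes_risk X F p \<le> cond_risk p F r"
  unfolding bayes_risk_def by simp

lemma bayes_risk_zero: "X \<noteq> {} \<Longrightarrow> bayes_risk X F 0 = 0"
  unfolding bayes_risk_def cond_risk_def by (simp add: image_constant_conv)

lemma bayes_risk_eqI:
  assumes "finite X" "r \<in> X" "\<And>r'. r' \<in> X \<Longrightarrow> cond_risk p F r \<le> cond_risk p F r'"
  shows "bayes_risk X F p = cond_risk p F r"
  unfolding bayes_risk_def using assms by (intro Min_eqI) auto

lemma bayes_risk_attained:
  assumes "finite X" "X \<noteq> {}"
  obtains r where "r \<in> X" "bayes_risk X F p = cond_risk p F r"
proof -
  have "bayes_risk X F p \<in> cond_risk p F ` X"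
    unfolding bayes_risk_def using assms by (intro Min_in) auto
  with that show thesis by blast
qed

lemma bayes_risk_nonneg:
  assumes "finite X" "X \<noteq> {}" "0 \<le> p" "\<And>r y. 0 \<le> F r y"
  shows "0 \<le> bayes_risk X F p"
  using bayes_risk_attained[OF assms(1,2)] cond_risk_nonneg[OF assms(3)] assms(4) by metis

lemma bayes_risk_scaleR:
  assumes "finite X" "X \<noteq> {}" "0 \<le> t"
  shows "bayes_risk X F (t *\<^sub>R p) = t * bayes_risk X F p"
proof -
  have "mono ((*) t)" using assms(3) by (intro monoI mult_left_mono)
  then have "t * Min (cond_risk p F ` X) = Min ((*) t ` cond_risk p F ` X)"
    using assms by (intro mono_Min_commute) auto
  then show ?thesis unfolding bayes_risk_def cond_risk_scaleR image_image by simp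
qed

lemma concave_on_bayes_risk:
  fixes F :: "'r \<Rightarrow> 'y::finite \<Rightarrow> real"
  assumes "finite X" "X \<noteq> {}"
  shows "concave_on UNIV (bayes_risk X F)"
  unfolding concave_on_iff
proof (intro conjI ballI allI impI convex_UNIV)
  fix p q :: "real^'y" and a b :: real
  assume "0 \<le> a" "0 \<le> b"
  then have "a * bayes_risk X F p + b * bayes_risk X F q \<le> cond_risk (a *\<^sub>R p + b *\<^sub>R q) F r"
    if "r \<in> X" for r
    unfolding cond_risk_add cond_risk_scaleR using bayes_risk_le[OF assms(1) that]
    by (intro add_mono mult_left_mono) auto
  then show "a * bayes_risk X F p + b * bayes_risk X F q \<le> bayes_risk X F (a *\<^sub>R p + b *\<^sub>R q)"
    unfolding bayes_risk_def[of X F "a *\<^sub>R p + b *\<^sub>R q"] using assms by simp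
qed

section \<open>Polyhedral surrogates attain their Bayes risks on a finite set\<close>

locale max_affine_loss =
  fixes A :: "'y::finite \<Rightarrow> ('a::euclidean_space \<times> real) set"
    and L :: "'a \<Rightarrow> 'y \<Rightarrow> real"
  assumes finite_pieces: "finite (A y)"
    and pieces_nonempty: "A y \<noteq> {}"
    and L_eq_Max: "L u y = Max ((\<lambda>(a, b). a \<bullet> u + b) ` A y)"
begin

definition active :: "'a \<Rightarrow> ('y \<times> 'a \<times> real) set" where
  "active u = {(y, a, b). (a, b) \<in> A y \<and> a \<bullet> u + b = L u y}"

definition representatives :: "'a set" where
  "representatives = (\<lambda>T. SOME u. active u = T) ` range active"

lemma piece_le: "(a, b) \<in> A y \<Longrightarrow> a \<bullet> u + b \<le> L u y"
  unfolding L_eq_Max using finite_pieces by (intro Max_ge) force+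

lemma active_selection:
  obtains \<alpha> \<beta> where "\<And>y. (\<alpha> y, \<beta> y) \<in> A y" "\<And>y. \<alpha> y \<bullet> u + \<beta> y = L u y"
proof -
  have "\<forall>y. \<exists>ab. ab \<in> A y \<and> fst ab \<bullet> u + snd ab = L u y"
  proof
    fix y
    have "L u y \<in> (\<lambda>(a, b). a \<bullet> u + b) ` A y"
      unfolding L_eq_Max using finite_pieces pieces_nonempty by (intro Max_in) auto
    then show "\<exists>ab. ab \<in> A y \<and> fst ab \<bullet> u + snd ab = L u y" by force
  qed
  from choice[OF this] obtain ab where "\<And>y. ab y \<in> A y \<and> fst (ab y) \<bullet> u + snd (ab y) = L u y"
    by blast
  then show thesis using that[of "fst \<circ> ab" "snd \<circ> ab"] by simp
qed

lemma active_subset: "active u \<subseteq> Sigma UNIV A"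
  unfolding active_def by auto

lemma finite_representatives: "finite representatives"
proof -
  have "finite (Pow (Sigma UNIV A))" using finite_pieces by auto
  then have "finite (range active)" using active_subset by (meson finite_subset image_subsetI PowI)
  then show ?thesis unfolding representatives_def by simp
qed

lemma representatives_nonempty: "representatives \<noteq> {}"
  unfolding representatives_def by simp

lemma representative_exists: "\<exists>s\<in>representatives. active s = active u"
  unfolding representatives_def by (metis (mono_tags, lifting) image_eqI rangeI someI)

lemma L_add_scaleR:
  assumes "(\<alpha>, \<beta>) \<in> A y" "\<alpha> \<bullet> u + \<beta> = L u y"
    and "\<And>a b. (a, b) \<in> A y \<Longrightarrow> t * ((a - \<alpha>) \<bullet> d) \<le> L u y - (a \<bullet> u + b)"
  shows "L (u + t *\<^sub>R d) y = L u y + t * (\<alpha> \<bullet> d)"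
  unfolding L_eq_Max[of "u + t *\<^sub>R d"]
proof (rule Max_eqI)
  show "finite ((\<lambda>(a, b). a \<bullet> (u + t *\<^sub>R d) + b) ` A y)" using finite_pieces by simp
next
  fix z assume "z \<in> (\<lambda>(a, b). a \<bullet> (u + t *\<^sub>R d) + b) ` A y"
  then obtain a b where "(a, b) \<in> A y" "z = a \<bullet> (u + t *\<^sub>R d) + b" by auto
  with assms(3) show "z \<le> L u y + t * (\<alpha> \<bullet> d)"
    by (fastforce simp: algebra_simps)
next
  show "L u y + t * (\<alpha> \<bullet> d) \<in> (\<lambda>(a, b). a \<bullet> (u + t *\<^sub>R d) + b) ` A y"
    using assms(1,2) by (force simp: algebra_simps intro!: image_eqI[of _ _ "(\<alpha>, \<beta>)"])
qed

lemma L_add_scaleR_staying: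
  assumes "(\<alpha>, \<beta>) \<in> A y" "\<alpha> \<bullet> u + \<beta> = L u y" "0 \<le> t"
    and "\<And>a b. (a, b) \<in> A y \<Longrightarrow> (a - \<alpha>) \<bullet> d \<le> 0"
  shows "L (u + t *\<^sub>R d) y = L u y + t * (\<alpha> \<bullet> d)"
proof (rule L_add_scaleR[OF assms(1,2)])
  fix a b assume ab: "(a, b) \<in> A y"
  have "t * ((a - \<alpha>) \<bullet> d) \<le> 0" using assms(3) assms(4)[OF ab] by (rule mult_nonneg_nonpos)
  also have "0 \<le> L u y - (a \<bullet> u + b)" using piece_le[OF ab] by simp
  finally show "t * ((a - \<alpha>) \<bullet> d) \<le> L u y - (a \<bullet> u + b)" .
qed

definition tied :: "('y \<Rightarrow> 'a) \<Rightarrow> 'a \<Rightarrow> 'a \<Rightarrow> bool" where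
  "tied \<alpha> u d \<longleftrightarrow> (\<forall>y a b. (y, a, b) \<in> active u \<longrightarrow> a \<bullet> d = \<alpha> y \<bullet> d)"

lemma tied_uminus: "tied \<alpha> u d \<Longrightarrow> tied \<alpha> u (- d)"
  unfolding tied_def by simp

lemma tied_diff_same_active:
  assumes \<alpha>: "\<And>y. (\<alpha> y, \<beta> y) \<in> A y" "\<And>y. \<alpha> y \<bullet> u + \<beta> y = L u y"
    and "active s = active u"
  shows "tied \<alpha> u (s - u)"
  unfolding tied_def
proof (intro allI impI)
  fix y a b assume "(y, a, b) \<in> active u"
  moreover have "(y, \<alpha> y, \<beta> y) \<in> active u" using \<alpha> unfolding active_def by simp
  ultimately have "(y, a, b) \<in> active s \<inter> active u" "(y, \<alpha> y, \<beta> y) \<in> active s \<inter> active u"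
    using \<open>active s = active u\<close> by auto
  then have "a \<bullet> s + b = \<alpha> y \<bullet> s + \<beta> y" "a \<bullet> u + b = \<alpha> y \<bullet> u + \<beta> y"
    unfolding active_def by auto
  then show "a \<bullet> (s - u) = \<alpha> y \<bullet> (s - u)" by (simp add: inner_diff_right)
qed

lemma first_overtaking_piece:
  assumes "(a\<^sub>0, b\<^sub>0) \<in> A y\<^sub>0" "0 < (a\<^sub>0 - \<alpha> y\<^sub>0) \<bullet> d"
  obtains t y\<^sub>1 a\<^sub>1 b\<^sub>1 where "0 \<le> t" "(a\<^sub>1, b\<^sub>1) \<in> A y\<^sub>1" "0 < (a\<^sub>1 - \<alpha> y\<^sub>1) \<bullet> d"
    "t * ((a\<^sub>1 - \<alpha> y\<^sub>1) \<bullet> d) = L u y\<^sub>1 - (a\<^sub>1 \<bullet> u + b\<^sub>1)"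
    "\<And>y a b. (a, b) \<in> A y \<Longrightarrow> t * ((a - \<alpha> y) \<bullet> d) \<le> L u y - (a \<bullet> u + b)"
proof -
  define J where "J = {(y, a, b). (a, b) \<in> A y \<and> 0 < (a - \<alpha> y) \<bullet> d}"
  define hit where "hit = (\<lambda>(y, a, b). (L u y - (a \<bullet> u + b)) / ((a - \<alpha> y) \<bullet> d))"
  define t where "t = Min (hit ` J)"
  have "finite J"
    using finite_subset[of J "Sigma UNIV A"] finite_pieces unfolding J_def by auto
  moreover have "(y\<^sub>0, a\<^sub>0, b\<^sub>0) \<in> J" using assms unfolding J_def by simp
  ultimately have t_le: "\<And>j. j \<in> J \<Longrightarrow> t \<le> hit j" and "t \<in> hit ` J"
    unfolding t_def by (auto intro!: Min_in)
  then obtain y\<^sub>1 a\<^sub>1 b\<^sub>1 where j: "(y\<^sub>1, a\<^sub>1, b\<^sub>1) \<in> J" "t = hit (y\<^sub>1, a\<^sub>1, b\<^sub>1)" by auto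
  have "0 \<le> t" using j piece_le unfolding J_def hit_def by auto
  have below: "t * ((a - \<alpha> y) \<bullet> d) \<le> L u y - (a \<bullet> u + b)" if "(a, b) \<in> A y" for y a b
  proof (cases "0 < (a - \<alpha> y) \<bullet> d")
    case True
    then have "t \<le> hit (y, a, b)" using t_le that unfolding J_def by simp
    with True show ?thesis unfolding hit_def by (simp add: pos_le_divide_eq)
  next
    case False
    then have "t * ((a - \<alpha> y) \<bullet> d) \<le> 0" using \<open>0 \<le> t\<close> by (simp add: mult_nonneg_nonpos)
    also have "0 \<le> L u y - (a \<bullet> u + b)" using piece_le[OF that] by simp
    finally show ?thesis .
  qed
  have "(a\<^sub>1, b\<^sub>1) \<in> A y\<^sub>1" "0 < (a\<^sub>1 - \<alpha> y\<^sub>1) \<bullet> d" using j(1) unfolding J_def by auto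
  moreover have "t * ((a\<^sub>1 - \<alpha> y\<^sub>1) \<bullet> d) = L u y\<^sub>1 - (a\<^sub>1 \<bullet> u + b\<^sub>1)"
    using j unfolding J_def hit_def by simp
  ultimately show thesis using that[OF \<open>0 \<le> t\<close>] below by blast
qed

lemma descent_step:
  assumes \<alpha>: "\<And>y. (\<alpha> y, \<beta> y) \<in> A y" "\<And>y. \<alpha> y \<bullet> u + \<beta> y = L u y"
    and "tied \<alpha> u d" and "(a\<^sub>0, b\<^sub>0) \<in> A y\<^sub>0" "0 < (a\<^sub>0 - \<alpha> y\<^sub>0) \<bullet> d"
  obtains t where "0 \<le> t" "active u \<subset> active (u + t *\<^sub>R d)"
    "\<And>y. L (u + t *\<^sub>R d) y = L u y + t * (\<alpha> y \<bullet> d)"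
proof -
  obtain t y\<^sub>1 a\<^sub>1 b\<^sub>1 where t: "0 \<le> t" "(a\<^sub>1, b\<^sub>1) \<in> A y\<^sub>1" "0 < (a\<^sub>1 - \<alpha> y\<^sub>1) \<bullet> d"
    "t * ((a\<^sub>1 - \<alpha> y\<^sub>1) \<bullet> d) = L u y\<^sub>1 - (a\<^sub>1 \<bullet> u + b\<^sub>1)"
    and below: "\<And>y a b. (a, b) \<in> A y \<Longrightarrow> t * ((a - \<alpha> y) \<bullet> d) \<le> L u y - (a \<bullet> u + b)"
    using first_overtaking_piece[where \<alpha> = \<alpha> and u = u, OF \<open>(a\<^sub>0, b\<^sub>0) \<in> A y\<^sub>0\<close> \<open>0 < (a\<^sub>0 - \<alpha> y\<^sub>0) \<bullet> d\<close>]
    by metis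
  define u' where "u' = u + t *\<^sub>R d"
  have L_u': "L u' y = L u y + t * (\<alpha> y \<bullet> d)" for y
    unfolding u'_def using \<alpha> below by (rule L_add_scaleR)
  have "active u \<subseteq> active u'"
  proof
    fix j assume "j \<in> active u"
    then obtain y a b where j: "j = (y, a, b)" "(a, b) \<in> A y" "a \<bullet> u + b = L u y"
      unfolding active_def by auto
    moreover have "a \<bullet> d = \<alpha> y \<bullet> d" using \<open>tied \<alpha> u d\<close> \<open>j \<in> active u\<close> j(1) unfolding tied_def by blast
    ultimately show "j \<in> active u'" using L_u'[of y] unfolding active_def u'_def by (simp add: algebra_simps)
  qed
  moreover have "(y\<^sub>1, a\<^sub>1, b\<^sub>1) \<in> active u'"
    using t(2,4) L_u'[of y\<^sub>1] unfolding active_def u'_def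
    by (auto simp: algebra_simps inner_add_right inner_diff_left)
  moreover have "(y\<^sub>1, a\<^sub>1, b\<^sub>1) \<notin> active u"
  proof
    assume "(y\<^sub>1, a\<^sub>1, b\<^sub>1) \<in> active u"
    then have "a\<^sub>1 \<bullet> d = \<alpha> y\<^sub>1 \<bullet> d" using \<open>tied \<alpha> u d\<close> unfolding tied_def by blast
    with t(3) show False by (simp add: inner_diff_left)
  qed
  ultimately have "active u \<subset> active u'" by blast
  from \<open>0 \<le> t\<close> this L_u' show ?thesis unfolding u'_def by (rule that)
qed

lemma ray_slope_nonneg:
  assumes L_nonneg: "\<And>u y. 0 \<le> L u y" and "0 \<le> w"
    and \<alpha>: "\<And>y. (\<alpha> y, \<beta> y) \<in> A y" "\<And>y. \<alpha> y \<bullet> u + \<beta> y = L u y"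
    and staying: "\<And>y a b. (a, b) \<in> A y \<Longrightarrow> (a - \<alpha> y) \<bullet> d \<le> 0"
  shows "0 \<le> (\<Sum>y\<in>UNIV. w$y * (\<alpha> y \<bullet> d))" (is "0 \<le> ?slope")
proof (rule ccontr)
  assume "\<not> 0 \<le> ?slope"
  have risk_nonneg: "0 \<le> cond_risk w L v" for v
    using \<open>0 \<le> w\<close> L_nonneg by (rule cond_risk_nonneg)
  define t where "t = (cond_risk w L u + 1) / - ?slope"
  have "0 \<le> t"
    unfolding t_def using \<open>\<not> 0 \<le> ?slope\<close> risk_nonneg[of u] by (simp add: divide_nonneg_neg)
  have "L (u + t *\<^sub>R d) y = L u y + t * (\<alpha> y \<bullet> d)" for y
    using \<alpha> \<open>0 \<le> t\<close> staying by (rule L_add_scaleR_staying)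
  then have "cond_risk w L (u + t *\<^sub>R d) = cond_risk w L u + t * ?slope"
    by (rule cond_risk_shift)
  also have "\<dots> = -1"
    unfolding t_def using \<open>\<not> 0 \<le> ?slope\<close> by (simp add: field_simps)
  finally show False
    using risk_nonneg by (metis neg_0_le_iff_le not_one_le_zero)
qed

text \<open>Tied directions come in opposite pairs, and by \<open>ray_slope_nonneg\<close> none of them has
  negative slope.\<close>
lemma flat_if_no_descent:
  assumes L_nonneg: "\<And>u y. 0 \<le> L u y" and "0 \<le> w"
    and \<alpha>: "\<And>y. (\<alpha> y, \<beta> y) \<in> A y" "\<And>y. \<alpha> y \<bullet> u + \<beta> y = L u y"
    and no_descent: "\<And>d y a b. tied \<alpha> u d \<Longrightarrow> (\<Sum>y\<in>UNIV. w$y * (\<alpha> y \<bullet> d)) \<le> 0 \<Longrightarrow>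
      (a, b) \<in> A y \<Longrightarrow> \<not> 0 < (a - \<alpha> y) \<bullet> d"
    and "tied \<alpha> u d"
  shows "(\<Sum>y\<in>UNIV. w$y * (\<alpha> y \<bullet> d)) = 0" and "\<And>y a b. (a, b) \<in> A y \<Longrightarrow> (a - \<alpha> y) \<bullet> d = 0"
proof -
  define slope where "slope d = (\<Sum>y\<in>UNIV. w$y * (\<alpha> y \<bullet> d))" for d
  have slope_nonneg: "0 \<le> slope d" if "tied \<alpha> u d" for d
  proof (rule ccontr)
    assume "\<not> 0 \<le> slope d"
    then have "(a - \<alpha> y) \<bullet> d \<le> 0" if "(a, b) \<in> A y" for y a b
      using no_descent[OF \<open>tied \<alpha> u d\<close> _ that] unfolding slope_def by simp
    from ray_slope_nonneg[OF L_nonneg \<open>0 \<le> w\<close> \<alpha> this] \<open>\<not> 0 \<le> slope d\<close> show False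
      unfolding slope_def by simp
  qed
  show zero: "(\<Sum>y\<in>UNIV. w$y * (\<alpha> y \<bullet> d)) = 0"
    using slope_nonneg[OF \<open>tied \<alpha> u d\<close>] slope_nonneg[OF tied_uminus[OF \<open>tied \<alpha> u d\<close>]]
    unfolding slope_def by (simp add: sum_negf)
  fix y a b assume "(a, b) \<in> A y"
  have "\<not> 0 < (a - \<alpha> y) \<bullet> d"
    using no_descent[OF \<open>tied \<alpha> u d\<close> _ \<open>(a, b) \<in> A y\<close>] zero by simp
  moreover have "\<not> 0 < (a - \<alpha> y) \<bullet> - d"
    using no_descent[OF tied_uminus[OF \<open>tied \<alpha> u d\<close>] _ \<open>(a, b) \<in> A y\<close>] zero by (simp add: sum_negf)
  ultimately show "(a - \<alpha> y) \<bullet> d = 0" by simp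
qed

text \<open>Induction on the number of inactive pieces: either a tied direction of nonpositive slope
  activates a new piece, or the weighted risk is flat along tied directions and the representative
  with the same active set has the same risk.\<close>
lemma exists_representative_le:
  assumes L_nonneg: "\<And>u y. 0 \<le> L u y" and "0 \<le> w"
  shows "\<exists>s\<in>representatives. cond_risk w L s \<le> cond_risk w L u"
proof (induction "card (Sigma UNIV A - active u)" arbitrary: u rule: less_induct)
  case less
  obtain \<alpha> \<beta> where \<alpha>: "\<And>y. (\<alpha> y, \<beta> y) \<in> A y" "\<And>y. \<alpha> y \<bullet> u + \<beta> y = L u y"
    using active_selection by metis
  show ?case
  proof (cases "\<exists>d y a b. tied \<alpha> u d \<and> (\<Sum>y\<in>UNIV. w$y * (\<alpha> y \<bullet> d)) \<le> 0 \<and>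
      (a, b) \<in> A y \<and> 0 < (a - \<alpha> y) \<bullet> d")
    case True
    then obtain d y a b where d: "tied \<alpha> u d" "(\<Sum>y\<in>UNIV. w$y * (\<alpha> y \<bullet> d)) \<le> 0"
      "(a, b) \<in> A y" "0 < (a - \<alpha> y) \<bullet> d"
      by blast
    then obtain t where t: "0 \<le> t" "active u \<subset> active (u + t *\<^sub>R d)"
      "\<And>y. L (u + t *\<^sub>R d) y = L u y + t * (\<alpha> y \<bullet> d)"
      using descent_step[OF \<alpha> d(1,3,4)] by metis
    have "Sigma UNIV A - active (u + t *\<^sub>R d) \<subset> Sigma UNIV A - active u"
      using t(2) active_subset by blast
    then have "card (Sigma UNIV A - active (u + t *\<^sub>R d)) < card (Sigma UNIV A - active u)"
      using finite_pieces by (intro psubset_card_mono) auto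
    then obtain s where "s \<in> representatives" "cond_risk w L s \<le> cond_risk w L (u + t *\<^sub>R d)"
      using less by blast
    moreover have "cond_risk w L (u + t *\<^sub>R d) \<le> cond_risk w L u"
      using cond_risk_shift[where g = "\<lambda>y. \<alpha> y \<bullet> d", OF t(3)] t(1) d(2)
      by (simp add: mult_nonneg_nonpos)
    ultimately show ?thesis by (blast intro: order_trans)
  next
    case False
    then have no_descent: "\<And>d y a b. tied \<alpha> u d \<Longrightarrow> (\<Sum>y\<in>UNIV. w$y * (\<alpha> y \<bullet> d)) \<le> 0 \<Longrightarrow>
        (a, b) \<in> A y \<Longrightarrow> \<not> 0 < (a - \<alpha> y) \<bullet> d"
      by blast
    obtain s where s: "s \<in> representatives" "active s = active u"
      using representative_exists by blast
    note flat = flat_if_no_descent[OF L_nonneg \<open>0 \<le> w\<close> \<alpha> no_descent tied_diff_same_active[OF \<alpha> s(2)]]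
    have "L (u + 1 *\<^sub>R (s - u)) y = L u y + 1 * (\<alpha> y \<bullet> (s - u))" for y
      using \<alpha> by (rule L_add_scaleR_staying) (auto simp: flat(2))
    then have "cond_risk w L s = cond_risk w L u + 1 * (\<Sum>y\<in>UNIV. w$y * (\<alpha> y \<bullet> (s - u)))"
      by (intro cond_risk_shift) simp
    then have "cond_risk w L s = cond_risk w L u" using flat(1) by simp
    with s(1) show ?thesis by (intro bexI[of _ s]) simp
  qed
qed

lemma bayes_risk_representatives_le:
  assumes "\<And>u y. 0 \<le> L u y" "0 \<le> w"
  shows "bayes_risk representatives L w \<le> cond_risk w L u"
  using exists_representative_le[OF assms] bayes_risk_le[OF finite_representatives]
  by (meson order_trans)

lemma borel_measurable_L: "(\<lambda>u. L u y) \<in> borel_measurable borel"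
proof -
  have "(\<lambda>u. L u y) = (\<lambda>u. Max ((\<lambda>ab. fst ab \<bullet> u + snd ab) ` A y))"
    unfolding L_eq_Max by (simp add: case_prod_beta')
  also have "\<dots> \<in> borel_measurable borel"
    using finite_pieces by (intro borel_measurable_Max) auto
  finally show ?thesis .
qed

end

section \<open>From calibration to a linear bound on excess risks\<close>

lemma polytope_optimality_cell:
  fixes L :: "'a \<Rightarrow> 'y::finite \<Rightarrow> real"
  assumes "finite S"
  shows "polytope {p \<in> label_simplex. \<forall>k\<in>S. cond_risk p L s \<le> cond_risk p L k}"
proof -
  have "(\<chi> y. L s y - L k y) \<bullet> p = cond_risk p L s - cond_risk p L k" for k p
    unfolding cond_risk_def inner_vec_def by (simp add: algebra_simps sum_subtractf)
  moreover have "(\<chi> y. 1) \<bullet> p = sum (($) p) UNIV" for p :: "real^'y"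
    by (simp add: inner_vec_def)
  moreover have "- axis y 1 \<bullet> p \<le> 0 \<longleftrightarrow> 0 \<le> p$y" for y and p :: "real^'y"
    by (simp add: inner_axis')
  ultimately have "{p \<in> label_simplex. \<forall>k\<in>S. cond_risk p L s \<le> cond_risk p L k} =
      (\<Inter>y. {p. - axis y 1 \<bullet> p \<le> 0}) \<inter> {p. (\<chi> y. 1) \<bullet> p = 1}
      \<inter> (\<Inter>k\<in>S. {p. (\<chi> y. L s y - L k y) \<bullet> p \<le> 0})"
    unfolding label_simplex_def less_eq_vec_def by auto
  moreover have "polyhedron \<dots>"
    using assms by (intro polyhedron_Int polyhedron_Inter)
      (auto intro: polyhedron_halfspace_le polyhedron_halfspace_ge polyhedron_hyperplane)
  moreover have "bounded (label_simplex :: (real^'y) set)"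
  proof -
    have "norm p \<le> 1" if "p \<in> label_simplex" for p :: "real^'y"
      using norm_le_l1_cart[of p] that unfolding label_simplex_def less_eq_vec_def by simp
    then show ?thesis unfolding bounded_iff by blast
  qed
  ultimately show ?thesis
    by (metis (no_types, lifting) bounded_subset mem_Collect_eq polytope_eq_bounded_polyhedron subsetI)
qed

text \<open>The surrogate Bayes risk is taken over a finite set \<open>S\<close> of reports; for the
  representatives of a polyhedral loss it is the infimum over all reports.\<close>
definition calibrated_at ::
  "('a \<Rightarrow> 'y::finite \<Rightarrow> real) \<Rightarrow> 'a set \<Rightarrow> ('a \<Rightarrow> 'r::finite) \<Rightarrow> ('r \<Rightarrow> 'y \<Rightarrow> real) \<Rightarrow> real^'y \<Rightarrow> bool"
  where "calibrated_at L S \<psi> ell p \<longleftrightarrow>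
    (\<exists>\<epsilon>>0. \<forall>u. cond_risk p L u < bayes_risk S L p + \<epsilon> \<longrightarrow> cond_risk p ell (\<psi> u) = bayes_risk UNIV ell p)"

lemma linear_bound_of_calibrated:
  fixes ell :: "'r::finite \<Rightarrow> 'y::finite \<Rightarrow> real"
  assumes "calibrated_at L S \<psi> ell p" "0 \<le> p"
    and Bayes_S: "\<And>u. bayes_risk S L p \<le> cond_risk p L u"
    and ell_nonneg: "\<And>r y. 0 \<le> ell r y"
  obtains c where "0 < c"
    "\<And>u. cond_risk p ell (\<psi> u) - bayes_risk UNIV ell p \<le> c * (cond_risk p L u - bayes_risk S L p)"
proof -
  obtain \<epsilon> where "0 < \<epsilon>" and cal:
    "\<And>u. cond_risk p L u < bayes_risk S L p + \<epsilon> \<Longrightarrow> cond_risk p ell (\<psi> u) = bayes_risk UNIV ell p"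
    using assms(1) unfolding calibrated_at_def by blast
  define B where "B = Max (range (cond_risk p ell))"
  have risk_le_B: "cond_risk p ell r \<le> B" for r unfolding B_def by simp
  have "0 \<le> B" using risk_le_B cond_risk_nonneg[OF \<open>0 \<le> p\<close>] ell_nonneg by (meson order_trans)
  have "0 \<le> bayes_risk UNIV ell p" using \<open>0 \<le> p\<close> ell_nonneg by (intro bayes_risk_nonneg) auto
  define c where "c = (B + 1) / \<epsilon>"
  have "0 < c" unfolding c_def using \<open>0 < \<epsilon>\<close> \<open>0 \<le> B\<close> by simp
  moreover have "cond_risk p ell (\<psi> u) - bayes_risk UNIV ell p \<le> c * (cond_risk p L u - bayes_risk S L p)"
    for u
  proof (cases "cond_risk p L u < bayes_risk S L p + \<epsilon>")
    case True
    then show ?thesis using cal \<open>0 < c\<close> Bayes_S[of u] by simp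
  next
    case False
    then have "c * \<epsilon> \<le> c * (cond_risk p L u - bayes_risk S L p)" using \<open>0 < c\<close> by simp
    moreover have "c * \<epsilon> = B + 1" unfolding c_def using \<open>0 < \<epsilon>\<close> by simp
    ultimately show ?thesis using risk_le_B[of "\<psi> u"] \<open>0 \<le> bayes_risk UNIV ell p\<close> by linarith
  qed
  ultimately show thesis using that by blast
qed

text \<open>The excess target risk is convex in the label distribution while the surrogate side is
  linear, so a linear bound at the vertices of a polytope holds on all of it.\<close>
lemma linear_bound_convex_hull:
  fixes ell :: "'r::finite \<Rightarrow> 'y::finite \<Rightarrow> real"
  assumes vertices: "\<And>q. q \<in> V \<Longrightarrow>
      cond_risk q ell r - bayes_risk UNIV ell q \<le> c * (cond_risk q L u - cond_risk q L s)"
    and "p \<in> convex hull V"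
  shows "cond_risk p ell r - bayes_risk UNIV ell p \<le> c * (cond_risk p L u - cond_risk p L s)"
proof -
  define f where "f p = cond_risk p ell r - bayes_risk UNIV ell p - c * (cond_risk p L u - cond_risk p L s)"
    for p
  have "convex_on (convex hull V) f"
  proof (rule convex_onI)
    fix t :: real and x y assume "0 < t" "t < 1"
    then have "(1 - t) * bayes_risk UNIV ell x + t * bayes_risk UNIV ell y
        \<le> bayes_risk UNIV ell ((1 - t) *\<^sub>R x + t *\<^sub>R y)"
      using concave_on_bayes_risk[of UNIV ell] unfolding concave_on_iff by simp
    then show "f ((1 - t) *\<^sub>R x + t *\<^sub>R y) \<le> (1 - t) * f x + t * f y"
      unfolding f_def cond_risk_add cond_risk_scaleR by (simp add: algebra_simps)
  qed (rule convex_convex_hull)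
  then have "f p \<le> 0"
    using convex_on_convex_hull_bound[of V f 0] vertices assms(2) unfolding f_def by force
  then show ?thesis unfolding f_def by simp
qed

lemma common_linear_bound:
  fixes ell :: "'r::finite \<Rightarrow> 'y::finite \<Rightarrow> real" and L :: "'a \<Rightarrow> 'y \<Rightarrow> real"
  assumes "finite Q" "Q \<subseteq> label_simplex"
    and Bayes_S: "\<And>p u. 0 \<le> p \<Longrightarrow> bayes_risk S L p \<le> cond_risk p L u"
    and ell_nonneg: "\<And>r y. 0 \<le> ell r y"
    and calibrated: "\<And>q. q \<in> Q \<Longrightarrow> calibrated_at L S \<psi> ell q"
  shows "\<exists>c>0. \<forall>q\<in>Q. \<forall>u.
    cond_risk q ell (\<psi> u) - bayes_risk UNIV ell q \<le> c * (cond_risk q L u - bayes_risk S L q)"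
proof -
  have "\<forall>q\<in>Q. \<exists>c>0. \<forall>u.
      cond_risk q ell (\<psi> u) - bayes_risk UNIV ell q \<le> c * (cond_risk q L u - bayes_risk S L q)"
  proof
    fix q assume "q \<in> Q"
    then have "0 \<le> q" using \<open>Q \<subseteq> label_simplex\<close> unfolding label_simplex_def by auto
    from linear_bound_of_calibrated[OF calibrated[OF \<open>q \<in> Q\<close>] this Bayes_S[OF this] ell_nonneg]
    show "\<exists>c>0. \<forall>u. cond_risk q ell (\<psi> u) - bayes_risk UNIV ell q
        \<le> c * (cond_risk q L u - bayes_risk S L q)" by metis
  qed
  then obtain c' where c': "\<And>q u. q \<in> Q \<Longrightarrow>
      cond_risk q ell (\<psi> u) - bayes_risk UNIV ell q \<le> c' q * (cond_risk q L u - bayes_risk S L q)"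
    by metis
  define c where "c = Max (insert 1 (c' ` Q))"
  have "1 \<le> c" unfolding c_def using \<open>finite Q\<close> by (intro Max_ge) auto
  moreover have "cond_risk q ell (\<psi> u) - bayes_risk UNIV ell q \<le> c * (cond_risk q L u - bayes_risk S L q)"
    if "q \<in> Q" for q u
  proof -
    have "0 \<le> q" using that \<open>Q \<subseteq> label_simplex\<close> unfolding label_simplex_def by auto
    then have "c' q * (cond_risk q L u - bayes_risk S L q) \<le> c * (cond_risk q L u - bayes_risk S L q)"
      unfolding c_def using \<open>finite Q\<close> that Bayes_S by (intro mult_right_mono) auto
    then show ?thesis using c'[OF that, of u] by simp
  qed
  ultimately show ?thesis by (intro exI[of _ c]) auto
qed

text \<open>The optimality cells of the finitely many representatives are polytopes covering the
  simplex; calibration at their finitely many vertices gives one constant for all of them.\<close>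
lemma uniform_linear_bound:
  fixes ell :: "'r::finite \<Rightarrow> 'y::finite \<Rightarrow> real" and L :: "'a \<Rightarrow> 'y \<Rightarrow> real"
  assumes "finite S" "S \<noteq> {}"
    and Bayes_S: "\<And>p u. 0 \<le> p \<Longrightarrow> bayes_risk S L p \<le> cond_risk p L u"
    and ell_nonneg: "\<And>r y. 0 \<le> ell r y"
    and calibrated: "\<And>p. p \<in> label_simplex \<Longrightarrow> calibrated_at L S \<psi> ell p"
  shows "\<exists>c>0. \<forall>p\<in>label_simplex. \<forall>u.
    cond_risk p ell (\<psi> u) - bayes_risk UNIV ell p \<le> c * (cond_risk p L u - bayes_risk S L p)"
proof -
  define cell where "cell s = {p \<in> label_simplex. \<forall>k\<in>S. cond_risk p L s \<le> cond_risk p L k}" for s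
  have "\<forall>s\<in>S. \<exists>V. finite V \<and> cell s = convex hull V"
    using polytope_optimality_cell[OF \<open>finite S\<close>] unfolding cell_def polytope_def by blast
  then obtain V where V: "\<And>s. s \<in> S \<Longrightarrow> finite (V s) \<and> cell s = convex hull V s"
    by metis
  define Q where "Q = (\<Union>s\<in>S. V s)"
  have vertex_cell: "q \<in> cell s" if "s \<in> S" "q \<in> V s" for s q
    using V[OF that(1)] hull_inc[OF that(2)] by simp
  have "finite Q" "Q \<subseteq> label_simplex"
    unfolding Q_def using V \<open>finite S\<close> vertex_cell unfolding cell_def by auto
  moreover have "\<And>q. q \<in> Q \<Longrightarrow> calibrated_at L S \<psi> ell q"
    using calibrated \<open>Q \<subseteq> label_simplex\<close> by blast
  ultimately obtain c where "0 < c" and vertex_bound: "\<And>q u. q \<in> Q \<Longrightarrow>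
      cond_risk q ell (\<psi> u) - bayes_risk UNIV ell q \<le> c * (cond_risk q L u - bayes_risk S L q)"
    using common_linear_bound[where ell = ell and \<psi> = \<psi>, OF _ _ Bayes_S ell_nonneg] by meson
  have "cond_risk p ell (\<psi> u) - bayes_risk UNIV ell p \<le> c * (cond_risk p L u - bayes_risk S L p)"
    if "p \<in> label_simplex" for p u
  proof -
    obtain s where s: "s \<in> S" "bayes_risk S L p = cond_risk p L s"
      by (rule bayes_risk_attained[OF \<open>finite S\<close> \<open>S \<noteq> {}\<close>])
    have "p \<in> cell s"
      unfolding cell_def using that bayes_risk_le[OF \<open>finite S\<close>, of _ L p] by (auto simp flip: s(2))
    have "cond_risk q ell (\<psi> u) - bayes_risk UNIV ell q \<le> c * (cond_risk q L u - cond_risk q L s)"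
      if "q \<in> V s" for q
    proof -
      have "q \<in> Q" "q \<in> cell s" using s(1) that vertex_cell unfolding Q_def by auto
      then have "bayes_risk S L q = cond_risk q L s"
        unfolding cell_def by (auto intro: bayes_risk_eqI[OF \<open>finite S\<close> s(1)])
      then show ?thesis using vertex_bound[OF \<open>q \<in> Q\<close>, of u] by simp
    qed
    moreover have "p \<in> convex hull V s" using \<open>p \<in> cell s\<close> V[OF s(1)] by simp
    ultimately show ?thesis unfolding s(2) by (rule linear_bound_convex_hull)
  qed
  with \<open>0 < c\<close> show ?thesis by blast
qed

lemma linear_bound_nonneg_weights:
  fixes ell :: "'r::finite \<Rightarrow> 'y::finite \<Rightarrow> real"
  assumes "finite S" "S \<noteq> {}"
    and simplex_bound: "\<And>p u. p \<in> label_simplex \<Longrightarrow>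
      cond_risk p ell (\<psi> u) - bayes_risk UNIV ell p \<le> c * (cond_risk p L u - bayes_risk S L p)"
    and "0 \<le> w"
  shows "cond_risk w ell (\<psi> u) + c * bayes_risk S L w \<le> bayes_risk UNIV ell w + c * cond_risk w L u"
proof -
  define t where "t = sum (($) w) UNIV"
  have "0 \<le> t" unfolding t_def using \<open>0 \<le> w\<close> by (simp add: less_eq_vec_def sum_nonneg)
  show ?thesis
  proof (cases "t = 0")
    case True
    then have "w = 0"
      using \<open>0 \<le> w\<close> unfolding t_def by (simp add: less_eq_vec_def sum_nonneg_eq_0_iff vec_eq_iff)
    then show ?thesis using \<open>S \<noteq> {}\<close> by (simp add: bayes_risk_zero cond_risk_def)
  next
    case False
    define p where "p = (1 / t) *\<^sub>R w"
    have w: "w = t *\<^sub>R p" unfolding p_def using False by simp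
    have "p \<in> label_simplex"
      unfolding label_simplex_def p_def using \<open>0 \<le> w\<close> \<open>0 \<le> t\<close> False
      by (auto simp: less_eq_vec_def t_def simp flip: sum_divide_distrib)
    then have "t * (cond_risk p ell (\<psi> u) - bayes_risk UNIV ell p)
        \<le> t * (c * (cond_risk p L u - bayes_risk S L p))"
      using simplex_bound \<open>0 \<le> t\<close> by (simp add: mult_left_mono)
    then show ?thesis
      unfolding w cond_risk_scaleR
      by (simp add: bayes_risk_scaleR assms(1,2) \<open>0 \<le> t\<close> algebra_simps)
  qed
qed

section \<open>Consistency implies calibration\<close>

lemma measurable_pair_count_space:
  fixes f :: "'x \<Rightarrow> 'y::countable \<Rightarrow> 'b"
  assumes "\<And>y. (\<lambda>x. f x y) \<in> measurable M N"
  shows "(\<lambda>z. f (fst z) (snd z)) \<in> measurable (M \<Otimes>\<^sub>M count_space UNIV) N"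
  using measurable_compose[OF measurable_fst assms]
  by (rule measurable_compose_countable'[where g = snd and I = UNIV]) auto

text \<open>Meaningful only for \<open>p \<in> label_simplex\<close>: otherwise \<open>embed_pmf\<close> is unspecified.\<close>
definition point_dist :: "'x measure \<Rightarrow> 'x \<Rightarrow> real^'y::finite \<Rightarrow> ('x \<times> 'y) measure" where
  "point_dist MX x\<^sub>0 p =
    distr (measure_pmf (embed_pmf (($) p))) (MX \<Otimes>\<^sub>M count_space UNIV) (\<lambda>y. (x\<^sub>0, y))"

lemma data_dist_point_dist: "x\<^sub>0 \<in> space MX \<Longrightarrow> data_dist MX (point_dist MX x\<^sub>0 p)"
  unfolding data_dist_def point_dist_def
  by (auto intro!: prob_space.prob_space_distr prob_space_measure_pmf simp: space_pair_measure)

lemma exp_loss_point_dist: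
  fixes F :: "'r \<Rightarrow> 'y::finite \<Rightarrow> real"
  assumes "x\<^sub>0 \<in> space MX" "p \<in> label_simplex"
    and F_meas: "\<And>y. (\<lambda>r. F r y) \<in> borel_measurable MR" and h: "h \<in> measurable MX MR"
    and F_nonneg: "\<And>r y. 0 \<le> F r y"
  shows "exp_loss F (point_dist MX x\<^sub>0 p) h = ennreal (cond_risk p F (h x\<^sub>0))"
proof -
  have "\<And>y. 0 \<le> p$y" and "(\<integral>\<^sup>+y. ennreal (p$y) \<partial>count_space UNIV) = 1"
    using \<open>p \<in> label_simplex\<close>
    by (auto simp: label_simplex_def less_eq_vec_def nn_integral_count_space_finite sum_ennreal)
  then have pmf_p: "pmf (embed_pmf (($) p)) = ($) p" by (simp add: fun_eq_iff pmf_embed_pmf)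
  have "(\<lambda>z. ennreal (F (h (fst z)) (snd z))) \<in> borel_measurable (MX \<Otimes>\<^sub>M count_space UNIV)"
    using measurable_compose[OF h F_meas] by (intro measurable_pair_count_space) simp
  then have "exp_loss F (point_dist MX x\<^sub>0 p) h = (\<integral>\<^sup>+y. ennreal (F (h x\<^sub>0) y) \<partial>embed_pmf (($) p))"
    unfolding exp_loss_def point_dist_def using \<open>x\<^sub>0 \<in> space MX\<close>
    by (subst nn_integral_distr) (auto simp: space_pair_measure)
  also have "\<dots> = (\<Sum>y\<in>UNIV. ennreal (p$y * F (h x\<^sub>0) y))"
    using \<open>\<And>y. 0 \<le> p$y\<close> F_nonneg
    by (simp add: nn_integral_measure_pmf nn_integral_count_space_finite pmf_p ennreal_mult)
  also have "\<dots> = ennreal (cond_risk p F (h x\<^sub>0))"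
    unfolding cond_risk_def using \<open>\<And>y. 0 \<le> p$y\<close> F_nonneg by (simp add: sum_ennreal)
  finally show ?thesis .
qed

lemma regret_point_dist_const:
  fixes F :: "'r \<Rightarrow> 'y::finite \<Rightarrow> real"
  assumes "x\<^sub>0 \<in> space MX" "p \<in> label_simplex" "space MR = UNIV"
    and "finite X" "X \<noteq> {}" and Bayes_X: "\<And>r. bayes_risk X F p \<le> cond_risk p F r"
    and F_meas: "\<And>y. (\<lambda>r. F r y) \<in> borel_measurable MR"
    and F_nonneg: "\<And>r y. 0 \<le> F r y"
  shows "regret MX MR F (point_dist MX x\<^sub>0 p) (\<lambda>_. r) = ennreal (cond_risk p F r - bayes_risk X F p)"
proof -
  have exp_loss: "exp_loss F (point_dist MX x\<^sub>0 p) h = ennreal (cond_risk p F (h x\<^sub>0))"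
    if "h \<in> measurable MX MR" for h
    using assms(1,2) F_meas that F_nonneg by (rule exp_loss_point_dist)
  have const: "(\<lambda>_. r') \<in> measurable MX MR" for r' using \<open>space MR = UNIV\<close> by simp
  have "(INF h\<in>measurable MX MR. exp_loss F (point_dist MX x\<^sub>0 p) h) = ennreal (bayes_risk X F p)"
  proof (rule antisym)
    obtain s where "s \<in> X" "bayes_risk X F p = cond_risk p F s"
      by (rule bayes_risk_attained[OF \<open>finite X\<close> \<open>X \<noteq> {}\<close>])
    then show "(INF h\<in>measurable MX MR. exp_loss F (point_dist MX x\<^sub>0 p) h) \<le> ennreal (bayes_risk X F p)"
      using exp_loss[OF const] by (intro INF_lower2[OF const[of s]]) simp
    show "ennreal (bayes_risk X F p) \<le> (INF h\<in>measurable MX MR. exp_loss F (point_dist MX x\<^sub>0 p) h)"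
      using exp_loss Bayes_X by (intro INF_greatest) (simp add: ennreal_leI)
  qed
  moreover have "0 \<le> bayes_risk X F p"
    using assms(2,4,5) F_nonneg by (intro bayes_risk_nonneg) (auto simp: label_simplex_def)
  ultimately show ?thesis
    unfolding regret_def exp_loss[OF const] by (simp add: ennreal_minus)
qed

lemma positive_lower_bound:
  fixes f :: "'r::finite \<Rightarrow> real"
  shows "\<exists>\<gamma>>0. \<forall>r. 0 < f r \<longrightarrow> \<gamma> \<le> f r"
proof (intro exI conjI allI impI)
  show "0 < Min (insert 1 (f ` {r. 0 < f r}))" by simp
  show "Min (insert 1 (f ` {r. 0 < f r})) \<le> f r" if "0 < f r" for r
    using that by (intro Min_le) auto
qed

text \<open>Constant hypotheses under point distributions turn consistency into calibration: otherwise
  surrogate-optimal sequences of reports would keep a target regret bounded away from zero.\<close>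
lemma calibrated_if_consistent:
  fixes ell :: "'r::finite \<Rightarrow> 'y::finite \<Rightarrow> real" and L :: "'a::euclidean_space \<Rightarrow> 'y \<Rightarrow> real"
  assumes "consistent MX L \<psi> ell" "x\<^sub>0 \<in> space MX" "p \<in> label_simplex"
    and "finite S" "S \<noteq> {}" and Bayes_S: "\<And>u. bayes_risk S L p \<le> cond_risk p L u"
    and L_meas: "\<And>y. (\<lambda>u. L u y) \<in> borel_measurable borel"
    and L_nonneg: "\<And>u y. 0 \<le> L u y" and ell_nonneg: "\<And>r y. 0 \<le> ell r y"
  shows "calibrated_at L S \<psi> ell p"
proof (rule ccontr)
  assume "\<not> calibrated_at L S \<psi> ell p"
  then have "\<forall>n. \<exists>u. cond_risk p L u < bayes_risk S L p + inverse (real (Suc n)) \<and>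
      cond_risk p ell (\<psi> u) \<noteq> bayes_risk UNIV ell p"
    unfolding calibrated_at_def by (metis of_nat_0_less_iff positive_imp_inverse_positive zero_less_Suc)
  then obtain us where us: "\<And>n. cond_risk p L (us n) < bayes_risk S L p + inverse (real (Suc n))"
    "\<And>n. cond_risk p ell (\<psi> (us n)) \<noteq> bayes_risk UNIV ell p"
    by metis
  define D where "D = point_dist MX x\<^sub>0 p"
  have L_regret: "regret MX borel L D (\<lambda>_. us n) = ennreal (cond_risk p L (us n) - bayes_risk S L p)" for n
    unfolding D_def using assms(2,3) _ assms(4,5) Bayes_S L_meas L_nonneg
    by (rule regret_point_dist_const) simp
  have ell_regret: "regret MX (count_space UNIV) ell D (\<lambda>_. r)
      = ennreal (cond_risk p ell r - bayes_risk UNIV ell p)" for r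
    unfolding D_def using assms(2,3) _ _ _ _ _ ell_nonneg
    by (rule regret_point_dist_const) (auto intro: bayes_risk_le)
  have "0 \<le> cond_risk p L (us n) - bayes_risk S L p"
    "cond_risk p L (us n) - bayes_risk S L p \<le> inverse (real (Suc n))" for n
    using Bayes_S[of "us n"] us(1)[of n] by auto
  then have "(\<lambda>n. cond_risk p L (us n) - bayes_risk S L p) \<longlonglongrightarrow> 0"
    by (intro tendsto_sandwich[OF _ _ tendsto_const LIMSEQ_inverse_real_of_nat] always_eventually) auto
  then have L_lim: "(\<lambda>n. regret MX borel L D (\<lambda>_. us n)) \<longlonglongrightarrow> 0"
    unfolding L_regret using tendsto_ennrealI by force
  have cons: "\<And>hs. (\<And>i. hs i \<in> borel_measurable MX) \<Longrightarrow> (\<lambda>i. regret MX borel L D (hs i)) \<longlonglongrightarrow> 0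
      \<Longrightarrow> (\<lambda>i. regret MX (count_space UNIV) ell D (\<psi> \<circ> hs i)) \<longlonglongrightarrow> 0"
    using assms(1) data_dist_point_dist[OF assms(2)] unfolding consistent_def D_def by blast
  have lim: "(\<lambda>n. regret MX (count_space UNIV) ell D (\<psi> \<circ> (\<lambda>_. us n))) \<longlonglongrightarrow> 0"
    by (rule cons[OF _ L_lim]) simp
  obtain \<gamma> where "0 < \<gamma>"
    and \<gamma>: "\<And>r. 0 < cond_risk p ell r - bayes_risk UNIV ell p \<Longrightarrow> \<gamma> \<le> cond_risk p ell r - bayes_risk UNIV ell p"
    using positive_lower_bound[of "\<lambda>r. cond_risk p ell r - bayes_risk UNIV ell p"] by blast
  have "ennreal \<gamma> \<le> regret MX (count_space UNIV) ell D (\<psi> \<circ> (\<lambda>_. us n))" for n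
    using \<gamma>[of "\<psi> (us n)"] us(2)[of n] bayes_risk_le[of UNIV "\<psi> (us n)" ell p]
    unfolding comp_def ell_regret by (simp add: ennreal_leI)
  then have "ennreal \<gamma> \<le> 0"
    by (intro tendsto_lowerbound[OF lim] always_eventually) auto
  with \<open>0 < \<gamma>\<close> show False by simp
qed

lemma (in max_affine_loss) pointwise_bound_if_consistent:
  fixes MX :: "'x measure" and ell :: "'r::finite \<Rightarrow> 'y \<Rightarrow> real" and \<psi> :: "'a \<Rightarrow> 'r"
  assumes "consistent MX L \<psi> ell" "space MX \<noteq> {}"
    and L_nonneg: "\<And>u y. 0 \<le> L u y" and ell_nonneg: "\<And>r y. 0 \<le> ell r y"
  shows "\<exists>c>0. \<forall>w u. 0 \<le> w \<longrightarrow>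
    cond_risk w ell (\<psi> u) + c * bayes_risk representatives L w \<le> bayes_risk UNIV ell w + c * cond_risk w L u"
proof -
  obtain x\<^sub>0 where "x\<^sub>0 \<in> space MX" using assms(2) by blast
  note Bayes = bayes_risk_representatives_le[OF L_nonneg]
  have "calibrated_at L representatives \<psi> ell p" if "p \<in> label_simplex" for p
    using assms(1) \<open>x\<^sub>0 \<in> space MX\<close> that finite_representatives representatives_nonempty
      Bayes borel_measurable_L L_nonneg ell_nonneg
    by (intro calibrated_if_consistent) (auto simp: label_simplex_def)
  then obtain c where "0 < c" and simplex_bound: "\<And>p u. p \<in> label_simplex \<Longrightarrow>
      cond_risk p ell (\<psi> u) - bayes_risk UNIV ell p \<le> c * (cond_risk p L u - bayes_risk representatives L p)"
    using uniform_linear_bound[where ell = ell and \<psi> = \<psi>,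
        OF finite_representatives representatives_nonempty Bayes ell_nonneg]
    by blast
  have "cond_risk w ell (\<psi> u) + c * bayes_risk representatives L w \<le> bayes_risk UNIV ell w + c * cond_risk w L u"
    if "0 \<le> w" for w u
    using finite_representatives representatives_nonempty simplex_bound that
    by (rule linear_bound_nonneg_weights)
  with \<open>0 < c\<close> show ?thesis by blast
qed

section \<open>Disintegration of data distributions\<close>

definition label_part :: "'x measure \<Rightarrow> ('x \<times> 'y) measure \<Rightarrow> 'y \<Rightarrow> 'x measure" where
  "label_part MX D y = distr (density D (\<lambda>z. indicator {y} (snd z))) MX fst"

lemma nn_integral_label_parts:
  fixes D :: "('x \<times> 'y::finite) measure"
  assumes sets_D: "sets D = sets (MX \<Otimes>\<^sub>M count_space UNIV)"
    and F: "F \<in> borel_measurable (MX \<Otimes>\<^sub>M count_space UNIV)"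
  shows "(\<integral>\<^sup>+z. F z \<partial>D) = (\<Sum>y\<in>UNIV. \<integral>\<^sup>+x. F (x, y) \<partial>label_part MX D y)"
proof -
  have meas_D: "measurable D N = measurable (MX \<Otimes>\<^sub>M count_space UNIV) N" for N :: "'b measure"
    by (rule measurable_cong_sets[OF sets_D refl])
  have F_y: "(\<lambda>x. F (x, y)) \<in> borel_measurable MX" for y
    using F by measurable
  have F_fst: "(\<lambda>z. F (fst z, y)) \<in> borel_measurable D" for y
    unfolding meas_D using F by measurable
  have ind: "(\<lambda>z. indicator {y} (snd z) :: ennreal) \<in> borel_measurable D" for y
    unfolding meas_D by measurable
  have "(\<integral>\<^sup>+z. F z \<partial>D) = (\<integral>\<^sup>+z. (\<Sum>y\<in>UNIV. indicator {y} (snd z) * F (fst z, y)) \<partial>D)"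
  proof (intro nn_integral_cong)
    fix z :: "'x \<times> 'y"
    have "(\<Sum>y\<in>UNIV. indicator {y} (snd z) * F (fst z, y)) = (\<Sum>y\<in>{snd z}. indicator {y} (snd z) * F (fst z, y))"
      by (intro sum.mono_neutral_right) auto
    then show "F z = (\<Sum>y\<in>UNIV. indicator {y} (snd z) * F (fst z, y))" by simp
  qed
  also have "\<dots> = (\<Sum>y\<in>UNIV. \<integral>\<^sup>+z. indicator {y} (snd z) * F (fst z, y) \<partial>D)"
    using ind F_fst by (intro nn_integral_sum) auto
  also have "\<dots> = (\<Sum>y\<in>UNIV. \<integral>\<^sup>+x. F (x, y) \<partial>label_part MX D y)"
  proof (intro sum.cong refl)
    fix y
    have fst: "fst \<in> measurable (density D (\<lambda>z. indicator {y} (snd z))) MX"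
      unfolding measurable_cong_sets[OF sets_density refl] meas_D by simp
    show "(\<integral>\<^sup>+z. indicator {y} (snd z) * F (fst z, y) \<partial>D) = (\<integral>\<^sup>+x. F (x, y) \<partial>label_part MX D y)"
      unfolding label_part_def using ind F_fst F_y fst
      by (simp add: nn_integral_density nn_integral_distr)
  qed
  finally show ?thesis .
qed

lemma label_part_le_marginal:
  fixes D :: "('x \<times> 'y::finite) measure"
  assumes sets_D: "sets D = sets (MX \<Otimes>\<^sub>M count_space UNIV)" and "A \<in> sets MX"
  shows "emeasure (label_part MX D y) A \<le> emeasure (distr D MX fst) A"
proof -
  have fst: "fst \<in> measurable D MX"
    unfolding measurable_cong_sets[OF sets_D refl] by simp
  then have fst': "fst \<in> measurable (density D (\<lambda>z. indicator {y} (snd z))) MX"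
    by (simp add: measurable_cong_sets[OF sets_density refl])
  have ind: "(\<lambda>z. indicator {y} (snd z) :: ennreal) \<in> borel_measurable D"
    unfolding measurable_cong_sets[OF sets_D refl] by measurable
  have B: "fst -` A \<inter> space D \<in> sets D" using fst \<open>A \<in> sets MX\<close> by (rule measurable_sets)
  have "emeasure (label_part MX D y) A = (\<integral>\<^sup>+z. indicator {y} (snd z) * indicator (fst -` A \<inter> space D) z \<partial>D)"
    unfolding label_part_def using \<open>A \<in> sets MX\<close> fst' B ind by (simp add: emeasure_distr emeasure_density)
  also have "\<dots> \<le> (\<integral>\<^sup>+z. indicator (fst -` A \<inter> space D) z \<partial>D)"
    by (intro nn_integral_mono) (auto simp: indicator_def)
  also have "\<dots> = emeasure (distr D MX fst) A"
    using \<open>A \<in> sets MX\<close> B fst by (simp add: emeasure_distr)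
  finally show ?thesis .
qed

text \<open>\<open>\<nu>\<close> plays the role of the marginal of \<open>D\<close> on instances and \<open>w x\<close> that of the
  conditional label distribution at \<open>x\<close>; only nonnegativity of \<open>w\<close> is recorded.\<close>
definition disintegration :: "'x measure \<Rightarrow> ('x \<times> 'y::finite) measure \<Rightarrow> 'x measure \<Rightarrow> ('x \<Rightarrow> real^'y) \<Rightarrow> bool"
  where "disintegration MX D \<nu> w \<longleftrightarrow> sets \<nu> = sets MX \<and> (\<forall>y. (\<lambda>x. w x $ y) \<in> borel_measurable MX)
    \<and> (\<forall>x. 0 \<le> w x) \<and> (\<forall>F \<in> borel_measurable (MX \<Otimes>\<^sub>M count_space UNIV).
      (\<integral>\<^sup>+z. F z \<partial>D) = (\<integral>\<^sup>+x. (\<Sum>y\<in>UNIV. ennreal (w x $ y) * F (x, y)) \<partial>\<nu>))"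

lemma label_part_RN_deriv:
  fixes D :: "('x \<times> 'y::finite) measure"
  assumes "data_dist MX D"
  defines "\<nu> \<equiv> distr D MX fst"
  shows "density \<nu> (RN_deriv \<nu> (label_part MX D y)) = label_part MX D y"
    and "AE x in \<nu>. RN_deriv \<nu> (label_part MX D y) x \<noteq> \<infinity>"
proof -
  have sets_D: "sets D = sets (MX \<Otimes>\<^sub>M count_space UNIV)" and "prob_space D"
    using assms unfolding data_dist_def by auto
  have "fst \<in> measurable D MX" unfolding measurable_cong_sets[OF sets_D refl] by simp
  interpret \<nu>: prob_space \<nu>
    unfolding \<nu>_def using \<open>prob_space D\<close> \<open>fst \<in> measurable D MX\<close> by (rule prob_space.prob_space_distr)
  have sets_part: "sets (label_part MX D y) = sets \<nu>"
    unfolding label_part_def \<nu>_def by simp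
  have ac: "absolutely_continuous \<nu> (label_part MX D y)"
    unfolding absolutely_continuous_def
  proof
    fix A assume "A \<in> null_sets \<nu>"
    then show "A \<in> null_sets (label_part MX D y)"
      using label_part_le_marginal[OF sets_D, of A y] sets_part
      unfolding \<nu>_def by (auto simp: null_sets_def intro: antisym)
  qed
  show "density \<nu> (RN_deriv \<nu> (label_part MX D y)) = label_part MX D y"
    using ac sets_part by (rule \<nu>.density_RN_deriv)
  have "finite_measure (label_part MX D y)"
  proof (rule finite_measureI)
    have "emeasure (label_part MX D y) (space MX) \<le> emeasure \<nu> (space MX)"
      unfolding \<nu>_def by (rule label_part_le_marginal[OF sets_D]) simp
    then show "emeasure (label_part MX D y) (space (label_part MX D y)) \<noteq> \<infinity>"
      using \<nu>.emeasure_space_1 by (auto simp: label_part_def \<nu>_def top_unique)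
  qed
  then show "AE x in \<nu>. RN_deriv \<nu> (label_part MX D y) x \<noteq> \<infinity>"
    using ac sets_part by (intro \<nu>.RN_deriv_finite finite_measure.sigma_finite_measure)
qed

lemma data_dist_disintegration:
  fixes D :: "('x \<times> 'y::finite) measure"
  assumes "data_dist MX D"
  obtains \<nu> w where "disintegration MX D \<nu> w"
proof -
  have sets_D: "sets D = sets (MX \<Otimes>\<^sub>M count_space UNIV)"
    using assms unfolding data_dist_def by auto
  define \<nu> where "\<nu> = distr D MX fst"
  have sets_\<nu>: "sets \<nu> = sets MX" unfolding \<nu>_def by simp
  define RN where "RN y = RN_deriv \<nu> (label_part MX D y)" for y
  have RN_meas: "RN y \<in> borel_measurable \<nu>" for y
    unfolding RN_def by (rule borel_measurable_RN_deriv)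
  have RN_finite: "AE x in \<nu>. RN y x \<noteq> \<infinity>" for y
    using label_part_RN_deriv(2)[OF assms] unfolding RN_def \<nu>_def .
  have "AE x in \<nu>. RN y x = ennreal (enn2real (RN y x))" for y
    by (rule AE_mp[OF RN_finite[of y]]) (simp add: less_top[symmetric])
  then have AE_finite: "AE x in \<nu>. \<forall>y\<in>UNIV. RN y x = ennreal (enn2real (RN y x))"
    by (intro AE_finite_allI) auto
  define w where "w x = (\<chi> y. enn2real (RN y x))" for x
  have "disintegration MX D \<nu> w"
    unfolding disintegration_def
  proof (intro conjI allI ballI sets_\<nu>)
    show "(\<lambda>x. w x $ y) \<in> borel_measurable MX" for y
      using RN_meas[of y] unfolding w_def measurable_cong_sets[OF sets_\<nu> refl] by simp
    show "0 \<le> w x" for x unfolding w_def by (simp add: less_eq_vec_def)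
    fix F :: "'x \<times> 'y \<Rightarrow> ennreal"
    assume F: "F \<in> borel_measurable (MX \<Otimes>\<^sub>M count_space UNIV)"
    then have F_y: "(\<lambda>x. F (x, y)) \<in> borel_measurable \<nu>" for y
      unfolding measurable_cong_sets[OF sets_\<nu> refl] by measurable
    have "(\<integral>\<^sup>+x. F (x, y) \<partial>label_part MX D y) = (\<integral>\<^sup>+x. RN y x * F (x, y) \<partial>\<nu>)" for y
      using label_part_RN_deriv(1)[OF assms, of y] RN_meas F_y unfolding RN_def \<nu>_def
      by (metis nn_integral_density)
    then have "(\<integral>\<^sup>+z. F z \<partial>D) = (\<Sum>y\<in>UNIV. \<integral>\<^sup>+x. RN y x * F (x, y) \<partial>\<nu>)"
      unfolding nn_integral_label_parts[OF sets_D F] by simp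
    also have "\<dots> = (\<integral>\<^sup>+x. (\<Sum>y\<in>UNIV. RN y x * F (x, y)) \<partial>\<nu>)"
      using RN_meas F_y by (intro nn_integral_sum[symmetric] borel_measurable_times_ennreal) auto
    also have "\<dots> = (\<integral>\<^sup>+x. (\<Sum>y\<in>UNIV. ennreal (w x $ y) * F (x, y)) \<partial>\<nu>)"
      using AE_finite unfolding w_def by (intro nn_integral_cong_AE) auto
    finally show "(\<integral>\<^sup>+z. F z \<partial>D) = (\<integral>\<^sup>+x. (\<Sum>y\<in>UNIV. ennreal (w x $ y) * F (x, y)) \<partial>\<nu>)" .
  qed
  then show thesis by (rule that)
qed

lemma borel_measurable_cond_risk:
  assumes "\<And>y. (\<lambda>x. w x $ y) \<in> borel_measurable M" "\<And>y. (\<lambda>x. F (h x) y) \<in> borel_measurable M"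
  shows "(\<lambda>x. cond_risk (w x) F (h x)) \<in> borel_measurable M"
  unfolding cond_risk_def using assms by (intro borel_measurable_sum borel_measurable_times) auto

lemma borel_measurable_bayes_risk:
  assumes "finite X" "\<And>y. (\<lambda>x. w x $ y) \<in> borel_measurable M"
  shows "(\<lambda>x. bayes_risk X F (w x)) \<in> borel_measurable M"
  unfolding bayes_risk_def using assms by (intro borel_measurable_Min borel_measurable_cond_risk) auto

lemma exp_loss_disintegration:
  assumes "disintegration MX D \<nu> w"
    and "\<And>y. (\<lambda>x. F (h x) y) \<in> borel_measurable MX" and F_nonneg: "\<And>r y. 0 \<le> F r y"
  shows "exp_loss F D h = (\<integral>\<^sup>+x. ennreal (cond_risk (w x) F (h x)) \<partial>\<nu>)"
proof -
  have "(\<lambda>z. ennreal (F (h (fst z)) (snd z))) \<in> borel_measurable (MX \<Otimes>\<^sub>M count_space UNIV)"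
    using assms(2) by (intro measurable_pair_count_space) simp
  moreover have "0 \<le> w x" for x using assms(1) unfolding disintegration_def by simp
  ultimately show ?thesis
    using assms(1) F_nonneg unfolding disintegration_def exp_loss_def by (simp add: ennreal_cond_risk)
qed

text \<open>The integrand need not be measurable (the link need not be), so this bound goes back to
  the definition of the nonnegative integral as a supremum over simple functions.\<close>
lemma nn_integral_le_disintegration:
  assumes "data_dist MX D" "disintegration MX D \<nu> w"
    and bound: "\<And>x. (\<Sum>y\<in>UNIV. ennreal (w x $ y) * f (x, y)) \<le> B x"
  shows "(\<integral>\<^sup>+z. f z \<partial>D) \<le> (\<integral>\<^sup>+x. B x \<partial>\<nu>)"
  unfolding nn_integral_def[of D]
proof (rule SUP_least)
  fix g assume "g \<in> {g. simple_function D g \<and> g \<le> f}"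
  then have g: "simple_function D g" "g \<le> f" by auto
  have "sets D = sets (MX \<Otimes>\<^sub>M count_space UNIV)" using assms(1) unfolding data_dist_def by simp
  then have "g \<in> borel_measurable (MX \<Otimes>\<^sub>M count_space UNIV)"
    using borel_measurable_simple_function[OF g(1)] measurable_cong_sets by blast
  then have "integral\<^sup>S D g = (\<integral>\<^sup>+x. (\<Sum>y\<in>UNIV. ennreal (w x $ y) * g (x, y)) \<partial>\<nu>)"
    using assms(2) nn_integral_eq_simple_integral[OF g(1)] unfolding disintegration_def by simp
  also have "\<dots> \<le> (\<integral>\<^sup>+x. B x \<partial>\<nu>)"
  proof (intro nn_integral_mono order_trans[OF _ bound])
    fix x show "(\<Sum>y\<in>UNIV. ennreal (w x $ y) * g (x, y)) \<le> (\<Sum>y\<in>UNIV. ennreal (w x $ y) * f (x, y))"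
      using g(2) by (intro sum_mono mult_left_mono) (auto simp: le_fun_def)
  qed
  finally show "integral\<^sup>S D g \<le> (\<integral>\<^sup>+x. B x \<partial>\<nu>)" .
qed

lemma exp_loss_le_disintegration:
  assumes "data_dist MX D" "disintegration MX D \<nu> w"
    and "\<And>x. cond_risk (w x) F (h x) \<le> B x" and "\<And>r y. 0 \<le> F r y"
  shows "exp_loss F D h \<le> (\<integral>\<^sup>+x. ennreal (B x) \<partial>\<nu>)"
  unfolding exp_loss_def
proof (rule nn_integral_le_disintegration[OF assms(1,2)])
  fix x
  have "0 \<le> w x" using assms(2) unfolding disintegration_def by simp
  with assms(3,4) show "(\<Sum>y\<in>UNIV. ennreal (w x $ y) * ennreal (F (h (fst (x, y))) (snd (x, y))))
      \<le> ennreal (B x)"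
    by (simp add: ennreal_cond_risk ennreal_leI)
qed

text \<open>The first Bayes-optimal report in an enumeration of \<open>S\<close> is a measurable selection.\<close>
lemma INF_exp_loss_le_integral_bayes_risk:
  fixes F :: "'r \<Rightarrow> 'y::finite \<Rightarrow> real"
  assumes dis: "disintegration MX D \<nu> w" and "finite S" "S \<noteq> {}" "space MR = UNIV"
    and F_meas: "\<And>y. (\<lambda>r. F r y) \<in> borel_measurable MR" and F_nonneg: "\<And>r y. 0 \<le> F r y"
  shows "(INF h\<in>measurable MX MR. exp_loss F D h) \<le> (\<integral>\<^sup>+x. ennreal (bayes_risk S F (w x)) \<partial>\<nu>)"
proof -
  have w_meas: "(\<lambda>x. w x $ y) \<in> borel_measurable MX" for y
    using dis unfolding disintegration_def by simp
  obtain ss where "set ss = S" using finite_list[OF \<open>finite S\<close>] by blast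
  define best where "best x = (LEAST i. i < length ss \<and> cond_risk (w x) F (ss ! i) \<le> bayes_risk S F (w x))"
    for x
  define h where "h x = ss ! best x" for x
  have "\<exists>i. i < length ss \<and> cond_risk (w x) F (ss ! i) \<le> bayes_risk S F (w x)" for x
    using bayes_risk_attained[OF \<open>finite S\<close> \<open>S \<noteq> {}\<close>, of F "w x"] \<open>set ss = S\<close>
    by (metis in_set_conv_nth order_refl)
  then have h_opt: "cond_risk (w x) F (h x) \<le> bayes_risk S F (w x)" for x
    unfolding h_def best_def by (rule LeastI2_ex) simp
  have [measurable]: "(\<lambda>x. cond_risk (w x) F (ss ! i)) \<in> borel_measurable MX" for i
    using w_meas by (intro borel_measurable_cond_risk) auto
  have [measurable]: "(\<lambda>x. bayes_risk S F (w x)) \<in> borel_measurable MX"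
    using \<open>finite S\<close> w_meas by (rule borel_measurable_bayes_risk)
  have "best \<in> measurable MX (count_space UNIV)" unfolding best_def by measurable
  then have "h \<in> measurable MX MR"
    unfolding h_def by (rule measurable_compose) (simp add: \<open>space MR = UNIV\<close>)
  then have "(INF h\<in>measurable MX MR. exp_loss F D h) \<le> exp_loss F D h" by (rule INF_lower)
  also have "\<dots> = (\<integral>\<^sup>+x. ennreal (cond_risk (w x) F (h x)) \<partial>\<nu>)"
    using dis measurable_compose[OF \<open>h \<in> measurable MX MR\<close> F_meas] F_nonneg
    by (rule exp_loss_disintegration)
  also have "\<dots> \<le> (\<integral>\<^sup>+x. ennreal (bayes_risk S F (w x)) \<partial>\<nu>)"
    using h_opt by (intro nn_integral_mono ennreal_leI)
  finally show ?thesis .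
qed

lemma integral_bayes_risk_le_INF_exp_loss:
  fixes MX :: "'x measure" and F :: "'r::finite \<Rightarrow> 'y::finite \<Rightarrow> real"
  assumes "disintegration MX D \<nu> w" and "\<And>r y. 0 \<le> F r y"
  shows "(\<integral>\<^sup>+x. ennreal (bayes_risk UNIV F (w x)) \<partial>\<nu>) \<le> (INF h\<in>measurable MX (count_space UNIV). exp_loss F D h)"
proof (rule INF_greatest)
  fix h :: "'x \<Rightarrow> 'r" assume h: "h \<in> measurable MX (count_space UNIV)"
  have "(\<lambda>x. F (h x) y) \<in> borel_measurable MX" for y
    using h by (rule measurable_compose) simp
  then have "exp_loss F D h = (\<integral>\<^sup>+x. ennreal (cond_risk (w x) F (h x)) \<partial>\<nu>)"
    using assms by (intro exp_loss_disintegration)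
  then show "(\<integral>\<^sup>+x. ennreal (bayes_risk UNIV F (w x)) \<partial>\<nu>) \<le> exp_loss F D h"
    by (simp add: nn_integral_mono ennreal_leI bayes_risk_le)
qed

lemma exp_loss_const_finite:
  fixes F :: "'r \<Rightarrow> 'y::finite \<Rightarrow> real"
  assumes "prob_space D"
  shows "exp_loss F D (\<lambda>_. r) < \<infinity>"
proof -
  have "F r y \<le> (\<Sum>y\<in>UNIV. \<bar>F r y\<bar>)" for y
  proof -
    have "F r y \<le> \<bar>F r y\<bar>" by simp
    also have "\<dots> \<le> (\<Sum>y\<in>UNIV. \<bar>F r y\<bar>)" by (rule member_le_sum) simp_all
    finally show ?thesis .
  qed
  then have "exp_loss F D (\<lambda>_. r) \<le> (\<integral>\<^sup>+z. ennreal (\<Sum>y\<in>UNIV. \<bar>F r y\<bar>) \<partial>D)"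
    unfolding exp_loss_def by (intro nn_integral_mono ennreal_leI)
  also have "\<dots> < \<infinity>" using prob_space.emeasure_space_1[OF assms] by simp
  finally show ?thesis .
qed

section \<open>Integrating the pointwise bound\<close>

lemma ennreal_diff_le_mult_diff:
  fixes a i b m c :: ennreal
  assumes "a + c * m \<le> i + c * b" "i < \<infinity>" "c * m < \<infinity>"
  shows "a - i \<le> c * (b - m)"
proof -
  have "b \<le> b - m + m" by (simp add: diff_add_self_ennreal linorder_not_le less_imp_le)
  then have "c * b \<le> c * (b - m) + c * m"
    by (metis distrib_left mult_left_mono zero_le)
  then have "a + c * m \<le> i + c * (b - m) + c * m"
    using assms(1) by (metis add.assoc add_left_mono order_trans)
  then have "a \<le> i + c * (b - m)"
    using \<open>c * m < \<infinity>\<close> by force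
  then show ?thesis using \<open>i < \<infinity>\<close> ennreal_minus_le_iff by auto
qed

lemma exp_loss_le_of_pointwise_bound:
  fixes MX :: "'x measure" and ell :: "'r::finite \<Rightarrow> 'y::finite \<Rightarrow> real"
    and L :: "'a::topological_space \<Rightarrow> 'y \<Rightarrow> real" and \<psi> :: "'a \<Rightarrow> 'r"
  assumes "data_dist MX D" and dis: "disintegration MX D \<nu> w"
    and h: "h \<in> borel_measurable MX" and "finite S" "S \<noteq> {}" "0 \<le> c"
    and pointwise: "\<And>w u. 0 \<le> w \<Longrightarrow>
      cond_risk w ell (\<psi> u) + c * bayes_risk S L w \<le> bayes_risk UNIV ell w + c * cond_risk w L u"
    and L_meas: "\<And>y. (\<lambda>u. L u y) \<in> borel_measurable borel"
    and L_nonneg: "\<And>u y. 0 \<le> L u y" and ell_nonneg: "\<And>r y. 0 \<le> ell r y"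
  shows "exp_loss ell D (\<psi> \<circ> h) + ennreal c * (\<integral>\<^sup>+x. ennreal (bayes_risk S L (w x)) \<partial>\<nu>)
    \<le> (\<integral>\<^sup>+x. ennreal (bayes_risk UNIV ell (w x)) \<partial>\<nu>) + ennreal c * exp_loss L D h"
proof -
  have "sets \<nu> = sets MX" and w: "\<And>x. 0 \<le> w x" and w_meas: "\<And>y. (\<lambda>x. w x $ y) \<in> borel_measurable MX"
    using dis unfolding disintegration_def by auto
  then have meas_\<nu>: "measurable \<nu> N = measurable MX N" for N :: "'b measure"
    by (intro measurable_cong_sets) auto
  define Bell where "Bell x = bayes_risk UNIV ell (w x)" for x
  define BL where "BL x = bayes_risk S L (w x)" for x
  define RL where "RL x = cond_risk (w x) L (h x)" for x
  have L_h: "(\<lambda>x. L (h x) y) \<in> borel_measurable MX" for y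
    using measurable_compose[OF h L_meas] by simp
  have [measurable]: "Bell \<in> borel_measurable \<nu>" "BL \<in> borel_measurable \<nu>" "RL \<in> borel_measurable \<nu>"
    unfolding Bell_def BL_def RL_def meas_\<nu> using w_meas \<open>finite S\<close> L_h
    by (auto intro: borel_measurable_bayes_risk borel_measurable_cond_risk)
  have BL_nonneg: "0 \<le> BL x" for x
    unfolding BL_def using \<open>finite S\<close> \<open>S \<noteq> {}\<close> w L_nonneg by (rule bayes_risk_nonneg)
  have bound: "cond_risk (w x) ell (\<psi> (h x)) \<le> Bell x + c * (RL x - BL x)" for x
    using pointwise[OF w[of x], of "h x"] unfolding Bell_def BL_def RL_def by (simp add: algebra_simps)
  have "exp_loss ell D (\<psi> \<circ> h) \<le> (\<integral>\<^sup>+x. ennreal (Bell x + c * (RL x - BL x)) \<partial>\<nu>)"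
    using bound by (intro exp_loss_le_disintegration[OF \<open>data_dist MX D\<close> dis _ ell_nonneg]) simp
  then have "exp_loss ell D (\<psi> \<circ> h) + ennreal c * (\<integral>\<^sup>+x. ennreal (BL x) \<partial>\<nu>)
      \<le> (\<integral>\<^sup>+x. ennreal (Bell x + c * (RL x - BL x)) + ennreal c * ennreal (BL x) \<partial>\<nu>)"
    by (simp add: nn_integral_add nn_integral_cmult)
  also have "\<dots> = (\<integral>\<^sup>+x. ennreal (Bell x) + ennreal c * ennreal (RL x) \<partial>\<nu>)"
  proof (intro nn_integral_cong)
    fix x
    have "0 \<le> cond_risk (w x) ell (\<psi> (h x))" using w ell_nonneg by (rule cond_risk_nonneg)
    then have "0 \<le> Bell x + c * (RL x - BL x)" using bound[of x] by linarith
    moreover have "0 \<le> RL x" unfolding RL_def using w L_nonneg by (rule cond_risk_nonneg)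
    moreover have "0 \<le> Bell x"
      unfolding Bell_def using w ell_nonneg by (intro bayes_risk_nonneg) auto
    ultimately show "ennreal (Bell x + c * (RL x - BL x)) + ennreal c * ennreal (BL x)
        = ennreal (Bell x) + ennreal c * ennreal (RL x)"
      using \<open>0 \<le> c\<close> BL_nonneg[of x] by (simp add: algebra_simps flip: ennreal_plus ennreal_mult)
  qed
  also have "\<dots> = (\<integral>\<^sup>+x. ennreal (Bell x) \<partial>\<nu>) + ennreal c * exp_loss L D h"
    using exp_loss_disintegration[where F = L and h = h, OF dis L_h L_nonneg]
    by (simp add: nn_integral_add nn_integral_cmult flip: RL_def)
  finally show ?thesis unfolding Bell_def BL_def .
qed

lemma data_dist_space_nonempty: "data_dist MX D \<Longrightarrow> space MX \<noteq> {}"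
  unfolding data_dist_def
  by (metis prob_space.not_empty sets_eq_imp_space_eq space_pair_measure Sigma_empty1)

lemma regret_le_of_pointwise_bound:
  fixes MX :: "'x measure" and ell :: "'r::finite \<Rightarrow> 'y::finite \<Rightarrow> real"
    and L :: "'a::topological_space \<Rightarrow> 'y \<Rightarrow> real" and \<psi> :: "'a \<Rightarrow> 'r"
  assumes "data_dist MX D" "h \<in> borel_measurable MX" "finite S" "S \<noteq> {}" "0 \<le> c"
    and pointwise: "\<And>w u. 0 \<le> w \<Longrightarrow>
      cond_risk w ell (\<psi> u) + c * bayes_risk S L w \<le> bayes_risk UNIV ell w + c * cond_risk w L u"
    and L_meas: "\<And>y. (\<lambda>u. L u y) \<in> borel_measurable borel"
    and L_nonneg: "\<And>u y. 0 \<le> L u y" and ell_nonneg: "\<And>r y. 0 \<le> ell r y"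
  shows "regret MX (count_space UNIV) ell D (\<psi> \<circ> h) \<le> ennreal c * regret MX borel L D h"
proof -
  obtain \<nu> w where dis: "disintegration MX D \<nu> w"
    by (rule data_dist_disintegration[OF assms(1)])
  define Il where "Il = (\<integral>\<^sup>+x. ennreal (bayes_risk UNIV ell (w x)) \<partial>\<nu>)"
  define IL where "IL = (\<integral>\<^sup>+x. ennreal (bayes_risk S L (w x)) \<partial>\<nu>)"
  have "prob_space D" using assms(1) unfolding data_dist_def by simp
  have Il_le: "Il \<le> (INF h\<in>measurable MX (count_space UNIV). exp_loss ell D h)"
    unfolding Il_def using dis ell_nonneg by (rule integral_bayes_risk_le_INF_exp_loss)
  have INF_L: "(INF h\<in>borel_measurable MX. exp_loss L D h) \<le> IL"
    unfolding IL_def using dis assms(3,4) _ L_meas L_nonneg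
    by (rule INF_exp_loss_le_integral_bayes_risk) simp
  obtain s where "s \<in> S" using \<open>S \<noteq> {}\<close> by blast
  have "Il \<le> exp_loss ell D (\<lambda>_. undefined)"
    using Il_le by (rule order_trans) (simp add: INF_lower)
  then have "Il < \<infinity>" using exp_loss_const_finite[OF \<open>prob_space D\<close>] by (rule order.strict_trans1)
  have "IL \<le> (\<integral>\<^sup>+x. ennreal (cond_risk (w x) L s) \<partial>\<nu>)"
    unfolding IL_def using bayes_risk_le[OF \<open>finite S\<close> \<open>s \<in> S\<close>]
    by (intro nn_integral_mono ennreal_leI)
  also have "\<dots> = exp_loss L D (\<lambda>_. s)"
    using dis L_nonneg by (intro exp_loss_disintegration[symmetric]) auto
  finally have "IL < \<infinity>"
    using exp_loss_const_finite[OF \<open>prob_space D\<close>, of L s] by (rule order.strict_trans1)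
  then have "ennreal c * IL < \<infinity>" by (simp add: ennreal_mult_less_top)
  have "exp_loss ell D (\<psi> \<circ> h) - Il \<le> ennreal c * (exp_loss L D h - IL)"
    using exp_loss_le_of_pointwise_bound[OF assms(1) dis assms(2-5) pointwise L_meas L_nonneg ell_nonneg]
      \<open>Il < \<infinity>\<close> \<open>ennreal c * IL < \<infinity>\<close>
    unfolding Il_def IL_def by (rule ennreal_diff_le_mult_diff)
  moreover have "regret MX (count_space UNIV) ell D (\<psi> \<circ> h) \<le> exp_loss ell D (\<psi> \<circ> h) - Il"
    unfolding regret_def using Il_le by (intro ennreal_minus_mono) auto
  moreover have "ennreal c * (exp_loss L D h - IL) \<le> ennreal c * regret MX borel L D h"
    unfolding regret_def using INF_L by (intro mult_left_mono ennreal_minus_mono) auto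
  ultimately show ?thesis by (meson order_trans)
qed

theorem theorem7:
  fixes MX :: "'x measure"
    and ell :: "'r::finite \<Rightarrow> 'y::finite \<Rightarrow> real"
    and L :: "'a::euclidean_space \<Rightarrow> 'y \<Rightarrow> real"
    and \<psi> :: "'a \<Rightarrow> 'r"
  assumes "nonneg_loss ell"
    and "nonneg_loss L"
    and "polyhedral_loss L"
    and "consistent MX L \<psi> ell"
  shows "\<exists>c::real. c > 0 \<and>
           (\<forall>h \<in> borel_measurable MX. \<forall>D. data_dist MX D \<longrightarrow>
              regret MX (count_space UNIV) ell D (\<psi> \<circ> h) \<le> ennreal c * regret MX borel L D h)"
proof -
  have "\<forall>y. \<exists>A. finite A \<and> A \<noteq> {} \<and> (\<forall>u. L u y = Max ((\<lambda>(a, b). a \<bullet> u + b) ` A))"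
    using assms(3) unfolding polyhedral_loss_def .
  then obtain A where "\<forall>y. finite (A y) \<and> A y \<noteq> {} \<and> (\<forall>u. L u y = Max ((\<lambda>(a, b). a \<bullet> u + b) ` A y))"
    by (rule choice[THEN exE])
  then interpret max_affine_loss A L by unfold_locales auto
  have L_nonneg: "\<And>u y. 0 \<le> L u y" and ell_nonneg: "\<And>r y. 0 \<le> ell r y"
    using assms(1,2) unfolding nonneg_loss_def by auto
  show ?thesis
  proof (cases "space MX = {}")
    case True
    then show ?thesis using data_dist_space_nonempty by (intro exI[of _ 1]) auto
  next
    case False
    then obtain c where "0 < c" and pointwise: "\<forall>w u. 0 \<le> w \<longrightarrow> cond_risk w ell (\<psi> u)
        + c * bayes_risk representatives L w \<le> bayes_risk UNIV ell w + c * cond_risk w L u"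
      using pointwise_bound_if_consistent[OF assms(4) _ L_nonneg ell_nonneg] by blast
    have "regret MX (count_space UNIV) ell D (\<psi> \<circ> h) \<le> ennreal c * regret MX borel L D h"
      if "h \<in> borel_measurable MX" "data_dist MX D" for h D
      using that(2,1) finite_representatives representatives_nonempty less_imp_le[OF \<open>0 < c\<close>]
        pointwise borel_measurable_L L_nonneg ell_nonneg
      by (intro regret_le_of_pointwise_bound) auto
    with \<open>0 < c\<close> show ?thesis by blast
  qed
qed

end
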